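(* Let $\mathcal{D}$ be a $\{K_3,K_4\}$-decomposition of $K_{18}$ with $\alpha=13$, let $W$ be the set of vertices $x$ with $\alpha_x\ge 2$, and for $i\in\{0,1,2,3\}$ let $t_i$ be the number of copies of $K_3$ in $\mathcal{D}$ having exactly $i$ vertices in $W$. Then $(t_0,t_1,t_2,t_3)\neq(0,3,5,5)$.
   Context: A $\{K_3,K_4\}$-decomposition of $K_v$ is a collection of subgraphs, each isomorphic to $K_3$ or $K_4$, such that every edge of $K_v$ lies in exactly one of them. $\alpha$ is the number of copies of $K_3$ in the decomposition, and for a vertex $x$, $\alpha_x$ is the number of copies of $K_3$ in the decomposition containing $x$. *)

theory Defs
  imports Main
begin

definition K34_decomposition :: "'a set \<Rightarrow> 'a set set \<Rightarrow> bool" where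
  "K34_decomposition V D \<longleftrightarrow>
     (\<forall>B\<in>D. B \<subseteq> V \<and> (card B = 3 \<or> card B = 4)) \<and>
     (\<forall>x\<in>V. \<forall>y\<in>V. x \<noteq> y \<longrightarrow> (\<exists>!B. B \<in> D \<and> x \<in> B \<and> y \<in> B))"

definition triangles :: "'a set set \<Rightarrow> 'a set set" where
  "triangles D = {B \<in> D. card B = 3}"

definition alpha :: "'a set set \<Rightarrow> nat" where
  "alpha D = card (triangles D)"

definition alpha_at :: "'a set set \<Rightarrow> 'a \<Rightarrow> nat" where
  "alpha_at D x = card {B \<in> triangles D. x \<in> B}"

end

theory Submission
  imports Defs
begin

text \<open>
  Counting the 17 edges at a vertex gives \<open>2 \<alpha>\<^sub>x + 3 \<beta>\<^sub>x = 17\<close>, where \<open>\<beta>\<^sub>x\<close> is the number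
  of copies of \<open>K\<^sub>4\<close> through \<open>x\<close>; in particular \<open>\<alpha>\<^sub>x \<ge> 1\<close>, so every vertex outside \<open>W\<close> lies in
  exactly one triangle. With the profile \<open>(0,3,5,5)\<close> the triangles meet \<open>W\<close> in 28 vertices,
  so \<open>|V - W| = 39 - 28 = 11\<close> and \<open>|W| = 7\<close>. Summing the degree equation over \<open>W\<close> shows
  that the 19 copies of \<open>K\<^sub>4\<close> meet \<open>W\<close> in 21 vertices, while counting the 42 ordered pairs
  of \<open>W\<close> shows that they contain only \<open>42 - 40 = 2\<close> of them. But a block meeting \<open>W\<close> in \<open>k\<close>
  vertices contains \<open>k (k - 1) \<ge> 2 k - 2\<close> ordered pairs of \<open>W\<close>, so \<open>2 \<cdot> 21 \<le> 2 \<cdot> 19 + 2\<close>.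
\<close>

lemma sum_card_containing_eq_sum_card_Int:
  assumes "finite S" "finite F"
  shows "(\<Sum>x\<in>S. card {B\<in>F. x \<in> B}) = (\<Sum>B\<in>F. card (B \<inter> S))"
proof -
  have "(\<Sum>x\<in>S. card {B\<in>F. x \<in> B}) = (\<Sum>x\<in>S. \<Sum>B\<in>{B\<in>F. x \<in> B}. 1)"
    by simp
  also have "\<dots> = (\<Sum>B\<in>F. \<Sum>x\<in>{x\<in>S. x \<in> B}. 1)"
    using assms by (rule sum.swap_restrict)
  also have "\<dots> = (\<Sum>B\<in>F. card (B \<inter> S))"
    by (simp add: Int_def conj_commute)
  finally show ?thesis .
qed

lemma sum_by_value:
  fixes f :: "'b \<Rightarrow> nat" and h :: "nat \<Rightarrow> 'c::comm_semiring_1"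
  assumes "finite F" "\<And>B. B \<in> F \<Longrightarrow> f B \<le> n"
  shows "(\<Sum>B\<in>F. h (f B)) = (\<Sum>i\<le>n. of_nat (card {B\<in>F. f B = i}) * h i)"
proof -
  have "(\<Sum>B\<in>F. h (f B)) = (\<Sum>i\<le>n. \<Sum>B\<in>{B\<in>F. f B = i}. h (f B))"
    using assms by (intro sum.group[symmetric]) auto
  also have "\<dots> = (\<Sum>i\<le>n. of_nat (card {B\<in>F. f B = i}) * h i)"
    by (intro sum.cong refl) simp
  finally show ?thesis .
qed

lemma sum_double_le_card_plus_pairs:
  fixes f :: "'b \<Rightarrow> nat"
  shows "2 * (\<Sum>B\<in>F. f B) \<le> 2 * card F + (\<Sum>B\<in>F. f B * (f B - 1))"
proof -
  have "2 * k \<le> 2 + k * (k - 1)" for k :: nat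
    by (cases k) (auto simp: algebra_simps)
  then have "(\<Sum>B\<in>F. 2 * f B) \<le> (\<Sum>B\<in>F. 2 + f B * (f B - 1))"
    by (intro sum_mono)
  then show ?thesis
    unfolding sum.distrib sum_distrib_left[symmetric] by (simp add: mult.commute)
qed

definition quadruples :: "'a set set \<Rightarrow> 'a set set" where
  "quadruples D = {B \<in> D. card B = 4}"

definition beta_at :: "'a set set \<Rightarrow> 'a \<Rightarrow> nat" where
  "beta_at D x = card {B \<in> quadruples D. x \<in> B}"

locale finite_K34_decomposition =
  fixes V :: "'a set" and D :: "'a set set"
  assumes finite_vertices: "finite V"
    and decomposition: "K34_decomposition V D"
begin

lemma block_subset: "B \<in> D \<Longrightarrow> B \<subseteq> V"
  using decomposition by (auto simp: K34_decomposition_def)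

lemma finite_block: "B \<in> D \<Longrightarrow> finite B"
  using block_subset finite_vertices by (rule finite_subset)

lemma finite_blocks: "finite D"
  using block_subset finite_vertices by (meson Pow_iff finite_Pow_iff finite_subset subsetI)

lemma unique_block:
  assumes "x \<in> V" "y \<in> V" "x \<noteq> y"
  shows "\<exists>!B. B \<in> D \<and> x \<in> B \<and> y \<in> B"
  using decomposition assms by (auto simp: K34_decomposition_def)

lemma blocks_eq_triangles_Un_quadruples: "D = triangles D \<union> quadruples D"
  using decomposition by (auto simp: K34_decomposition_def triangles_def quadruples_def)

lemma finite_triangles: "finite (triangles D)"
  using finite_blocks by (simp add: triangles_def)

lemma finite_quadruples: "finite (quadruples D)"
  using finite_blocks by (simp add: quadruples_def)

lemma sum_blocks_split:
  "(\<Sum>B\<in>D. f B) = (\<Sum>B\<in>triangles D. f B) + (\<Sum>B\<in>quadruples D. f B)"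
proof -
  have "triangles D \<inter> quadruples D = {}"
    by (auto simp: triangles_def quadruples_def)
  then show ?thesis
    using finite_triangles finite_quadruples
    by (subst blocks_eq_triangles_Un_quadruples) (rule sum.union_disjoint)
qed

lemma card_remove_eq_sum_blocks_through:
  assumes "x \<in> V" "S \<subseteq> V"
  shows "card (S - {x}) = (\<Sum>B\<in>{B\<in>D. x \<in> B}. card (B \<inter> (S - {x})))"
proof -
  have "card {B\<in>{B\<in>D. x \<in> B}. y \<in> B} = 1" if y: "y \<in> S - {x}" for y
  proof -
    have "y \<in> V" "x \<noteq> y" using assms y by auto
    from unique_block[OF assms(1) this] obtain B
      where "B \<in> D \<and> x \<in> B \<and> y \<in> B" "\<And>C. C \<in> D \<and> x \<in> C \<and> y \<in> C \<Longrightarrow> C = B"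
      by (elim ex1E) blast
    then have "{B\<in>{B\<in>D. x \<in> B}. y \<in> B} = {B}" by blast
    then show ?thesis by simp
  qed
  then have "card (S - {x}) = (\<Sum>y\<in>S - {x}. card {B\<in>{B\<in>D. x \<in> B}. y \<in> B})"
    by simp
  also have "\<dots> = (\<Sum>B\<in>{B\<in>D. x \<in> B}. card (B \<inter> (S - {x})))"
    using assms finite_vertices finite_blocks
    by (intro sum_card_containing_eq_sum_card_Int) (auto intro: finite_subset)
  finally show ?thesis .
qed

lemma degree_equation:
  assumes "x \<in> V"
  shows "2 * alpha_at D x + 3 * beta_at D x = card V - 1"
proof -
  have "card V - 1 = (\<Sum>B\<in>{B\<in>D. x \<in> B}. card (B \<inter> (V - {x})))"
    using card_remove_eq_sum_blocks_through[OF assms order_refl] assms finite_vertices by simp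
  also have "\<dots> = (\<Sum>B\<in>D. if x \<in> B then card B - 1 else 0)"
  proof -
    have "card (B \<inter> (V - {x})) = card B - 1" if "B \<in> D" "x \<in> B" for B
      using that block_subset finite_block by (simp add: Int_absorb2 flip: Int_Diff)
    then show ?thesis
      using finite_blocks by (auto simp: sum.inter_filter intro: sum.cong)
  qed
  also have "\<dots> = (\<Sum>B\<in>triangles D. if x \<in> B then 2 else 0)
      + (\<Sum>B\<in>quadruples D. if x \<in> B then 3 else 0)"
    unfolding sum_blocks_split
    by (intro arg_cong2[where f = "(+)"] sum.cong) (auto simp: triangles_def quadruples_def)
  also have "\<dots> = (\<Sum>B\<in>{B\<in>triangles D. x \<in> B}. 2) + (\<Sum>B\<in>{B\<in>quadruples D. x \<in> B}. 3)"
    by (simp only: sum.inter_filter[OF finite_triangles] sum.inter_filter[OF finite_quadruples])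
  also have "\<dots> = 2 * alpha_at D x + 3 * beta_at D x"
    by (simp add: alpha_at_def beta_at_def)
  finally show ?thesis by simp
qed

lemma sum_alpha_at:
  assumes "S \<subseteq> V"
  shows "(\<Sum>x\<in>S. alpha_at D x) = (\<Sum>B\<in>triangles D. card (B \<inter> S))"
  unfolding alpha_at_def
  using assms finite_vertices finite_triangles
  by (intro sum_card_containing_eq_sum_card_Int) (auto intro: finite_subset)

lemma sum_beta_at:
  assumes "S \<subseteq> V"
  shows "(\<Sum>x\<in>S. beta_at D x) = (\<Sum>B\<in>quadruples D. card (B \<inter> S))"
  unfolding beta_at_def
  using assms finite_vertices finite_quadruples
  by (intro sum_card_containing_eq_sum_card_Int) (auto intro: finite_subset)

lemma sum_degree_equation:
  assumes "S \<subseteq> V"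
  shows "2 * (\<Sum>B\<in>triangles D. card (B \<inter> S)) + 3 * (\<Sum>B\<in>quadruples D. card (B \<inter> S))
    = card S * (card V - 1)"
proof -
  have "card S * (card V - 1) = (\<Sum>x\<in>S. 2 * alpha_at D x + 3 * beta_at D x)"
    using assms degree_equation by (simp add: subset_iff)
  also have "\<dots> = 2 * (\<Sum>x\<in>S. alpha_at D x) + 3 * (\<Sum>x\<in>S. beta_at D x)"
    by (simp add: sum.distrib sum_distrib_left)
  finally show ?thesis
    using assms by (simp add: sum_alpha_at sum_beta_at)
qed

lemma card_triangles_quadruples:
  "6 * card (triangles D) + 12 * card (quadruples D) = card V * (card V - 1)"
proof -
  have "(\<Sum>B\<in>triangles D. card (B \<inter> V)) = 3 * card (triangles D)"
    using block_subset by (simp add: triangles_def Int_absorb2)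
  moreover have "(\<Sum>B\<in>quadruples D. card (B \<inter> V)) = 4 * card (quadruples D)"
    using block_subset by (simp add: quadruples_def Int_absorb2)
  ultimately show ?thesis
    using sum_degree_equation[OF order_refl] by simp
qed

lemma sum_ordered_pairs_in_blocks:
  assumes "S \<subseteq> V"
  shows "(\<Sum>B\<in>D. card (B \<inter> S) * (card (B \<inter> S) - 1)) = card S * (card S - 1)"
proof -
  have fin: "finite S"
    using assms finite_vertices by (rule finite_subset)
  have "card S * (card S - 1) = (\<Sum>x\<in>S. card (S - {x}))"
    using fin by simp
  also have "\<dots> = (\<Sum>x\<in>S. \<Sum>B\<in>{B\<in>D. x \<in> B}. card (B \<inter> (S - {x})))"
    using assms by (intro sum.cong refl card_remove_eq_sum_blocks_through) auto
  also have "\<dots> = (\<Sum>B\<in>D. \<Sum>x\<in>{x\<in>S. x \<in> B}. card (B \<inter> S - {x}))"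
    unfolding Int_Diff using fin finite_blocks by (rule sum.swap_restrict)
  also have "\<dots> = (\<Sum>B\<in>D. card (B \<inter> S) * (card (B \<inter> S) - 1))"
  proof (intro sum.cong refl)
    fix B assume "B \<in> D"
    then have "finite (B \<inter> S)"
      using finite_block by blast
    moreover have "{x\<in>S. x \<in> B} = B \<inter> S"
      by blast
    ultimately show "(\<Sum>x\<in>{x\<in>S. x \<in> B}. card (B \<inter> S - {x})) = card (B \<inter> S) * (card (B \<inter> S) - 1)"
      by simp
  qed
  finally show ?thesis ..
qed

lemma alpha_at_pos:
  assumes "x \<in> V" "\<not> 3 dvd card V - 1"
  shows "alpha_at D x > 0"
proof (rule ccontr)
  assume "\<not> alpha_at D x > 0"
  then have "card V - 1 = 3 * beta_at D x"
    using degree_equation[OF assms(1)] by simp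
  with assms(2) show False
    by (metis dvd_triv_left)
qed

lemma card_light_vertices:
  assumes "\<not> 3 dvd card V - 1"
  defines "W \<equiv> {x \<in> V. 2 \<le> alpha_at D x}"
  shows "card (V - W) + (\<Sum>B\<in>triangles D. card (B \<inter> W)) = 3 * alpha D"
proof -
  have "alpha_at D x = 1" if "x \<in> V - W" for x
    using that alpha_at_pos[OF _ assms(1)] by (fastforce simp: W_def)
  then have "card (V - W) = (\<Sum>x\<in>V - W. alpha_at D x)"
    by simp
  moreover have "(\<Sum>x\<in>V. alpha_at D x) = 3 * alpha D"
    using sum_alpha_at[OF order_refl] block_subset
    by (simp add: triangles_def alpha_def Int_absorb2)
  moreover have "(\<Sum>x\<in>V. alpha_at D x) = (\<Sum>x\<in>V - W. alpha_at D x) + (\<Sum>x\<in>W. alpha_at D x)"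
    using finite_vertices by (intro sum.subset_diff) (auto simp: W_def)
  ultimately show ?thesis
    using sum_alpha_at[of W] by (simp add: W_def)
qed

end

theorem mainTheorem13:
  fixes V :: "'a set" and D :: "'a set set"
  assumes "finite V" and "card V = 18"
    and "K34_decomposition V D"
    and "alpha D = 13"
  defines "W \<equiv> {x \<in> V. alpha_at D x \<ge> 2}"
  defines "t \<equiv> (\<lambda>i::nat. card {B \<in> triangles D. card (B \<inter> W) = i})"
  shows "(t 0, t 1, t 2, t 3) \<noteq> (0, 3, 5, 5)"
proof
  assume profile: "(t 0, t 1, t 2, t 3) = (0, 3, 5, 5)"
  interpret finite_K34_decomposition V D
    using assms(1,3) by unfold_locales
  have W_subset: "W \<subseteq> V"
    by (auto simp: W_def)
  have t_values: "t 0 = 0" "t 1 = 3" "t 2 = 5" "t 3 = 5"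
    using profile by simp_all
  have sum_triangles: "(\<Sum>B\<in>triangles D. h (card (B \<inter> W))) = 3 * h 1 + 5 * h 2 + 5 * h 3"
    for h :: "nat \<Rightarrow> nat"
  proof -
    have "card (B \<inter> W) \<le> card B" if "B \<in> triangles D" for B
      using that finite_block by (intro card_mono) (auto simp: triangles_def)
    then have "(\<Sum>B\<in>triangles D. h (card (B \<inter> W))) = (\<Sum>i\<le>3. t i * h i)"
      using sum_by_value[OF finite_triangles, of "\<lambda>B. card (B \<inter> W)" 3 h]
      by (simp add: t_def triangles_def)
    also have "\<dots> = 3 * h 1 + 5 * h 2 + 5 * h 3"
      using t_values by (simp add: sum.atMost_Suc eval_nat_numeral)
    finally show ?thesis .
  qed
  have "card (V - W) + 28 = 39"
    using card_light_vertices sum_triangles[of id] assms(2,4) by (simp add: W_def)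
  then have card_W: "card W = 7"
    using card_Diff_subset[OF finite_subset[OF W_subset assms(1)] W_subset] assms(2) by simp
  have "card (quadruples D) = 19"
    using card_triangles_quadruples assms(2,4) by (simp add: alpha_def)
  moreover have "(\<Sum>B\<in>quadruples D. card (B \<inter> W)) = 21"
    using sum_degree_equation[OF W_subset] sum_triangles[of id] card_W assms(2) by simp
  moreover have "(\<Sum>B\<in>quadruples D. card (B \<inter> W) * (card (B \<inter> W) - 1)) = 2"
    using sum_ordered_pairs_in_blocks[OF W_subset] sum_triangles[of "\<lambda>k. k * (k - 1)"] card_W
    by (simp add: sum_blocks_split)
  ultimately show False
    using sum_double_le_card_plus_pairs[of "\<lambda>B. card (B \<inter> W)" "quadruples D"] by simp
qed

end
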